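(* Let $F$ be an $m\times n$ matrix, $B$ an $m\times p$ matrix and $H$ an $l\times n$ matrix. Let $x\in\mathbb{R}^n$ satisfy $Fx=Bf$ for an unknown $f\in\mathbb{R}^p$, and let the observation be $y=Hx+\eta\in\mathbb{R}^l$, where $\eta$ is a realization of a zero-mean random $l$-vector with unknown correlation matrix $R_\eta=E\eta\eta'$. Suppose $$\mathscr G=\{f\in\mathbb{R}^p:(Q_1f,f)_p\le 1\},\qquad \mathscr G_2=\{R_\eta:\operatorname{tr}(Q_2R_\eta)\le 1\},$$ where $Q_1$ ($p\times p$) and $Q_2$ ($l\times l$) are symmetric positive definite matrices. Let $\mathscr F=\{F'z+H'u: z\in\mathbb{R}^m,u\in\mathbb{R}^l\}$. If $\ell\in\mathscr F$, then the minimax a priori estimate of $x\mapsto(\ell,x)_n$ is $\widehat{(\ell,x)}=(\hat u,y)_l$ (i.e. $\hat c=0$) with $\hat u=Q_2Hp$, where $p$ together with some $\hat z\in\mathbb{R}^m$ solves $$Fp=BQ_1^{-1}B'\hat z,\qquad F'\hat z=\ell-H'Q_2Hp,$$ and the minimax a priori error equals $$\sup_{x,R_\eta}E[(\ell,x)_n-\widehat{(\ell,x)}]^2=(\ell,p)_n.$$ If $\ell\notin\mathscr F$, then the minimax a priori error is infinite.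
   Context: $(\cdot,\cdot)_k$ is the Euclidean inner product on $\mathbb{R}^k$; $B'$ is the transpose. For $\ell\in\mathbb{R}^n$, estimates of $(\ell,x)_n$ are affine functions $y\mapsto(u,y)_l+c$, $u\in\mathbb{R}^l$, $c\in\mathbb{R}$, with worst-case error $\sigma(u,c)=\sup\{E[(\ell,x)_n-(u,y)_l-c]^2: Fx\in B(\mathscr G), R_\eta\in\mathscr G_2\}$, where $B(\mathscr G)=\{Bf:f\in\mathscr G\}$. The minimax a priori (mean-squared) estimate is $(\hat u,y)_l+\hat c$ with $\sigma(\hat u,\hat c)=\inf_{u,c}\sigma(u,c)$; this infimum $\hat\sigma$ is the minimax a priori error. *)

theory Defs
  imports "HOL-Probability.Probability"
begin

definition sym_posdef :: "real^'k^'k \<Rightarrow> bool" where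
  "sym_posdef Q \<longleftrightarrow> transpose Q = Q \<and> (\<forall>v. v \<noteq> 0 \<longrightarrow> 0 < v \<bullet> (Q *v v))"

definition Gset :: "real^'p^'p \<Rightarrow> (real^'p) set" where
  "Gset Q1 = {f. (Q1 *v f) \<bullet> f \<le> 1}"

text \<open>Correlation matrix E[eta eta'] of a random l-vector, given by its distribution mu on R^l.\<close>
definition corr_matrix :: "(real^'l) measure \<Rightarrow> real^'l^'l" where
  "corr_matrix \<mu> = (\<chi> i j. \<integral> e. e$i * e$j \<partial>\<mu>)"

definition noise_dists :: "real^'l^'l \<Rightarrow> (real^'l) measure set" where
  "noise_dists Q2 = {\<mu>. prob_space \<mu> \<and> sets \<mu> = sets borel \<and>
      (\<forall>i. integrable \<mu> (\<lambda>e. (e$i)^2)) \<and> (\<forall>i. (\<integral> e. e$i \<partial>\<mu>) = 0) \<and>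
      trace (Q2 ** corr_matrix \<mu>) \<le> 1}"

definition worst_error ::
  "real^'n^'m \<Rightarrow> real^'p^'m \<Rightarrow> real^'n^'l \<Rightarrow> real^'p^'p \<Rightarrow> real^'l^'l \<Rightarrow> real^'n
   \<Rightarrow> real^'l \<Rightarrow> real \<Rightarrow> ennreal" where
  "worst_error F B H Q1 Q2 lv u c =
     (SUP x \<in> {x. \<exists>f \<in> Gset Q1. F *v x = B *v f}. SUP \<mu> \<in> noise_dists Q2.
        \<integral>\<^sup>+ e. ennreal (((lv \<bullet> x) - (u \<bullet> (H *v x + e)) - c)^2) \<partial>\<mu>)"

definition minimax_error ::
  "real^'n^'m \<Rightarrow> real^'p^'m \<Rightarrow> real^'n^'l \<Rightarrow> real^'p^'p \<Rightarrow> real^'l^'l \<Rightarrow> real^'n \<Rightarrow> ennreal" where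
  "minimax_error F B H Q1 Q2 lv = (INF uc. worst_error F B H Q1 Q2 lv (fst uc) (snd uc))"

definition Fspace :: "real^'n^'m \<Rightarrow> real^'n^'l \<Rightarrow> (real^'n) set" where
  "Fspace F H = {transpose F *v z + transpose H *v u | z u. True}"

end

theory Submission
  imports Defs
begin

(*
  Writing y = Hx + eta, the mean-squared error of the estimate (u, y) + c is the bias
  ((l - H'u, x) - c)^2 plus the noise term E (u, eta)^2 = tr (u u' R_eta).  If l - H'u has a
  component r in ker F, then x + t r stays admissible and the bias is unbounded in t; since
  ker F is the orthogonal complement of range F', this happens for every u exactly when l is
  not in {F'z + H'u}.

  For l in that space the KKT system is S (p, z) = (l, 0) for a self-adjoint operator S whose
  kernel is orthogonal to (l, 0), so it is solvable.  With f = Q1^-1 B'z one gets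
  (l, p) = a + b, where a = (Q1 f, f) and b = (Q2 Hp, Hp).  For u = Q2 Hp the Cauchy-Schwarz
  inequality for the forms Q1 and Q2 bounds the bias by a and the noise term by b.  Conversely,
  for any (u, c) the admissible states x = t p (source t f, t^2 a <= 1) and the symmetric
  two-point noise on {r Hp, -r Hp} (r^2 b <= 1) force an error of at least
  s1^2/a + s2^2/b with s1 + s2 = a + b, and s^2/a >= 2s - a gives the lower bound a + b.
*)

lemma inner_transpose_mult: "(transpose A *v x) \<bullet> y = x \<bullet> ((A::real^'a^'b) *v y)"
  by (simp add: dot_lmul_matrix)

lemma symmetric_matrix_inner:
  assumes "transpose A = A"
  shows "x \<bullet> (A *v y) = y \<bullet> ((A::real^'a^'a) *v x)"
  by (metis assms inner_transpose_mult inner_commute)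

lemma inner_congruence:
  "x \<bullet> ((transpose A ** Q ** A) *v y) = (A *v x) \<bullet> ((Q::real^'a^'a) *v ((A::real^'b^'a) *v y))"
proof -
  have "(transpose A ** Q ** A) *v y = transpose A *v (Q *v (A *v y))"
    by (simp only: matrix_vector_mul_assoc matrix_mul_assoc)
  then show ?thesis
    by (metis inner_commute inner_transpose_mult)
qed

lemma sym_posdef_symmetric: "sym_posdef Q \<Longrightarrow> transpose Q = Q"
  by (simp add: sym_posdef_def)

lemma sym_posdef_nonneg: "sym_posdef Q \<Longrightarrow> 0 \<le> v \<bullet> (Q *v v)"
  unfolding sym_posdef_def by (cases "v = 0") (auto intro: less_imp_le)

lemma sym_posdef_eq_0_iff: "sym_posdef Q \<Longrightarrow> v \<bullet> (Q *v v) = 0 \<longleftrightarrow> v = 0"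
  unfolding sym_posdef_def by (metis inner_zero_left less_irrefl)

lemma sym_posdef_invertible:
  fixes Q :: "real^'a^'a"
  assumes "sym_posdef Q"
  shows "Q ** matrix_inv Q = mat 1" and "matrix_inv Q ** Q = mat 1"
proof -
  have "inj ((*v) Q)"
  proof (rule linear_inj_on_iff_eq_0[THEN iffD2])
    show "\<forall>x\<in>UNIV. Q *v x = 0 \<longrightarrow> x = 0"
      using sym_posdef_eq_0_iff[OF assms] by (metis inner_zero_right)
  qed simp_all
  then have "det Q \<noteq> 0"
    using det_nz_iff_inj[of "(*v) Q"] by simp
  then have "Q ** matrix_inv Q = mat 1 \<and> matrix_inv Q ** Q = mat 1"
    unfolding invertible_det_nz[symmetric] invertible_def matrix_inv_def by (rule someI_ex)
  then show "Q ** matrix_inv Q = mat 1" "matrix_inv Q ** Q = mat 1"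
    by auto
qed

lemma sym_posdef_matrix_inv:
  fixes Q :: "real^'a^'a"
  assumes Q: "sym_posdef Q"
  shows "sym_posdef (matrix_inv Q)"
  unfolding sym_posdef_def
proof (intro conjI allI impI)
  let ?P = "matrix_inv Q"
  have "transpose ?P = transpose ?P ** (Q ** ?P)"
    by (simp add: sym_posdef_invertible[OF Q])
  also have "\<dots> = transpose (transpose Q ** ?P) ** ?P"
    by (simp add: matrix_mul_assoc matrix_transpose_mul)
  finally show "transpose ?P = ?P"
    by (simp add: sym_posdef_symmetric[OF Q] sym_posdef_invertible[OF Q])
  fix v :: "real^'a" assume "v \<noteq> 0"
  have v: "v = Q *v (?P *v v)"
    by (simp add: matrix_vector_mul_assoc sym_posdef_invertible[OF Q])
  with \<open>v \<noteq> 0\<close> have "?P *v v \<noteq> 0" by auto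
  then have "0 < (?P *v v) \<bullet> (Q *v (?P *v v))"
    using Q by (simp add: sym_posdef_def)
  then show "0 < v \<bullet> (?P *v v)"
    by (metis v inner_commute)
qed

lemma sym_posdef_cauchy_schwarz:
  fixes Q :: "real^'a^'a"
  assumes Q: "sym_posdef Q"
  shows "(v \<bullet> (Q *v w))^2 \<le> (v \<bullet> (Q *v v)) * (w \<bullet> (Q *v w))"
proof (cases "v = 0")
  case False
  define \<alpha> where "\<alpha> = v \<bullet> (Q *v v)"
  define \<beta> where "\<beta> = v \<bullet> (Q *v w)"
  have "0 < \<alpha>" using Q False by (simp add: \<alpha>_def sym_posdef_def)
  have "0 \<le> (w - (\<beta>/\<alpha>) *\<^sub>R v) \<bullet> (Q *v (w - (\<beta>/\<alpha>) *\<^sub>R v))"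
    by (rule sym_posdef_nonneg[OF Q])
  also have "\<dots> = w \<bullet> (Q *v w) - 2 * (\<beta>/\<alpha>) * \<beta> + (\<beta>/\<alpha>)^2 * \<alpha>"
    using symmetric_matrix_inner[OF sym_posdef_symmetric[OF Q], of w v]
    by (simp add: \<alpha>_def \<beta>_def power2_eq_square algebra_simps)
  also have "\<dots> = w \<bullet> (Q *v w) - \<beta>^2 / \<alpha>"
    using \<open>0 < \<alpha>\<close> by (simp add: field_simps power2_eq_square)
  finally have "\<beta>^2 / \<alpha> \<le> w \<bullet> (Q *v w)" by simp
  then have "\<beta>^2 \<le> w \<bullet> (Q *v w) * \<alpha>"
    using \<open>0 < \<alpha>\<close> by (simp add: pos_divide_le_eq)
  then show ?thesis by (simp add: \<alpha>_def \<beta>_def mult.commute)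
qed simp

lemma range_selfadjoint:
  fixes S :: "'a::euclidean_space \<Rightarrow> 'a"
  assumes "linear S" and "\<And>x y. S x \<bullet> y = x \<bullet> S y"
  shows "range S = (S -` {0})\<^sup>\<bottom>"
proof -
  have "adjoint S = S"
    by (rule adjoint_unique) (use assms(2) in auto)
  then have "S -` {0} = (range S)\<^sup>\<bottom>"
    using ker_orthogonal_comp_adjoint[OF assms(1)] by simp
  then show ?thesis
    by (simp add: orthogonal_comp_self linear_subspace_image[OF assms(1) subspace_UNIV])
qed

lemma range_transpose_mult:
  "range ((*v) (transpose A)) = ((*v) (A::real^'a^'b) -` {0})\<^sup>\<bottom>"
proof -
  have "(*v) A -` {0} = (range ((*v) (transpose A)))\<^sup>\<bottom>"
    using ker_orthogonal_comp_adjoint[of "(*v) A"] unfolding adjoint_matrix by simp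
  then show ?thesis
    by (metis orthogonal_comp_self linear_subspace_image matrix_vector_mul_linear subspace_UNIV)
qed

lemma kernel_vector_not_orthogonal:
  assumes "w \<notin> range ((*v) (transpose A))"
  obtains r where "(A::real^'a^'b) *v r = 0" and "w \<bullet> r \<noteq> 0"
  using assms unfolding range_transpose_mult orthogonal_comp_def orthogonal_def
  by (auto simp: inner_commute)

lemma transpose_congruence:
  "transpose Q = Q \<Longrightarrow> transpose (transpose A ** Q ** A) = transpose A ** Q ** (A::real^'b^'a)"
  by (simp add: matrix_transpose_mul matrix_mul_assoc)

definition kkt_operator ::
  "real^'n^'m \<Rightarrow> real^'n^'n \<Rightarrow> real^'m^'m \<Rightarrow> (real^'n) \<times> (real^'m) \<Rightarrow> (real^'n) \<times> (real^'m)" where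
  "kkt_operator F N M = (\<lambda>(a, b). (N *v a + transpose F *v b, F *v a - M *v b))"

lemma linear_kkt_operator: "linear (kkt_operator F N M)"
  unfolding kkt_operator_def
  by (rule linearI) (auto simp: scaleR_vector_matrix_assoc algebra_simps)

lemma kkt_operator_selfadjoint:
  assumes "transpose N = N" and "transpose M = M"
  shows "kkt_operator F N M x \<bullet> y = x \<bullet> kkt_operator F N M y"
proof -
  obtain a b c d where xy: "x = (a, b)" "y = (c, d)" by force
  have "(N *v a) \<bullet> c = a \<bullet> (N *v c)" "(M *v b) \<bullet> d = b \<bullet> (M *v d)"
    using symmetric_matrix_inner[OF assms(1)] symmetric_matrix_inner[OF assms(2)]
    by (metis inner_commute)+
  moreover have "(F *v a) \<bullet> d = a \<bullet> (transpose F *v d)"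
    by (metis inner_transpose_mult inner_commute)
  ultimately show ?thesis
    unfolding kkt_operator_def xy
    by (simp only: inner_Pair inner_add_left inner_add_right inner_diff_left inner_diff_right
        case_prod_conv inner_transpose_mult)
qed

lemma kkt_operator_eq_0:
  assumes "kkt_operator F N M (a, b) = 0"
  shows "F *v a = M *v b" and "a \<bullet> (N *v a) + b \<bullet> (M *v b) = 0"
proof -
  from assms have Na: "N *v a + transpose F *v b = 0" and Fa: "F *v a = M *v b"
    unfolding kkt_operator_def by (simp_all add: zero_prod_def)
  show "F *v a = M *v b" by (rule Fa)
  have "0 = a \<bullet> (N *v a + transpose F *v b)"
    by (simp only: Na inner_zero_right)
  also have "\<dots> = a \<bullet> (N *v a) + b \<bullet> (M *v b)"
    by (simp only: inner_add_right inner_commute[of a "transpose F *v b"] inner_transpose_mult Fa)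
  finally show "a \<bullet> (N *v a) + b \<bullet> (M *v b) = 0" ..
qed

lemma kkt_system_solvable:
  fixes F :: "real^'n^'m" and B :: "real^'p^'m" and H :: "real^'n^'l"
    and Q1 :: "real^'p^'p" and Q2 :: "real^'l^'l" and lv :: "real^'n"
  assumes Q1: "sym_posdef Q1" and Q2: "sym_posdef Q2" and lv: "lv \<in> Fspace F H"
  shows "\<exists>p z. F *v p = (B ** matrix_inv Q1 ** transpose B) *v z \<and>
               transpose F *v z = lv - transpose H *v (Q2 *v (H *v p))"
proof -
  define N where "N = transpose H ** Q2 ** H"
  \<comment> \<open>that is, B Q1^-1 B', written in the congruence form of \<open>inner_congruence\<close>\<close>
  define M where "M = transpose (transpose B) ** matrix_inv Q1 ** transpose B"
  have Q1_inv: "sym_posdef (matrix_inv Q1)"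
    by (rule sym_posdef_matrix_inv[OF Q1])
  let ?S = "kkt_operator F N M"
  have "r \<bullet> (lv, 0) = 0" if "?S r = 0" for r
  proof -
    obtain a b where r: "r = (a, b)" by force
    have "(H *v a) \<bullet> (Q2 *v (H *v a)) + (transpose B *v b) \<bullet> (matrix_inv Q1 *v (transpose B *v b)) = 0"
      using kkt_operator_eq_0(2)[OF that[unfolded r]] by (simp only: N_def M_def inner_congruence)
    then have Ha: "H *v a = 0" and "transpose B *v b = 0"
      using sym_posdef_nonneg[OF Q2, of "H *v a"] sym_posdef_nonneg[OF Q1_inv, of "transpose B *v b"]
        sym_posdef_eq_0_iff[OF Q2] sym_posdef_eq_0_iff[OF Q1_inv]
      by (smt (verit))+
    then have "F *v a = 0"
      using kkt_operator_eq_0(1)[OF that[unfolded r]] unfolding M_def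
      by (simp add: matrix_vector_mul_assoc[symmetric] del: transpose_matrix_vector)
    moreover obtain z0 u0 where "lv = transpose F *v z0 + transpose H *v u0"
      using lv unfolding Fspace_def by blast
    ultimately have "lv \<bullet> a = 0"
      using Ha by (simp add: inner_add_left inner_transpose_mult del: transpose_matrix_vector)
    then show ?thesis
      using r by (simp add: inner_commute)
  qed
  moreover have "range ?S = (?S -` {0})\<^sup>\<bottom>"
    unfolding N_def M_def
    by (intro range_selfadjoint linear_kkt_operator kkt_operator_selfadjoint transpose_congruence
        sym_posdef_symmetric Q2 Q1_inv)
  ultimately have "(lv, 0) \<in> range ?S"
    unfolding orthogonal_comp_def orthogonal_def by auto
  then obtain p z where "?S (p, z) = (lv, 0)"
    by (metis surj_pair rangeE)
  then show ?thesis
    unfolding kkt_operator_def N_def M_def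
    by (intro exI[of _ p] exI[of _ z]) (auto simp: matrix_vector_mul_assoc matrix_mul_assoc algebra_simps)
qed

definition finite_second_moments :: "(real^'l) measure \<Rightarrow> bool" where
  "finite_second_moments \<mu> \<longleftrightarrow>
     prob_space \<mu> \<and> sets \<mu> = sets borel \<and> (\<forall>i. integrable \<mu> (\<lambda>e. (e$i)^2))"

lemma noise_dists_finite_second_moments: "\<mu> \<in> noise_dists Q \<Longrightarrow> finite_second_moments \<mu>"
  unfolding noise_dists_def finite_second_moments_def by auto

lemma norm_le_one_plus_inner_self: "norm (e::'a::real_inner) \<le> 1 + e \<bullet> e"
proof -
  have "2 * norm e \<le> 1 + (norm e)^2"
    using zero_le_power2[of "norm e - 1"] by (simp add: power2_eq_square algebra_simps)
  then have "2 * norm e \<le> 1 + e \<bullet> e"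
    by (simp add: power2_norm_eq_inner)
  then show ?thesis
    using norm_ge_zero[of e] by linarith
qed

lemma integrable_quadratically_bounded:
  fixes g :: "real^'l \<Rightarrow> real"
  assumes \<mu>: "finite_second_moments \<mu>" and "continuous_on UNIV g"
    and bound: "\<And>e. \<bar>g e\<bar> \<le> C * (1 + e \<bullet> e)"
  shows "integrable \<mu> g"
proof (rule Bochner_Integration.integrable_bound)
  interpret prob_space \<mu> using \<mu> by (simp add: finite_second_moments_def)
  have "(\<lambda>e::real^'l. e \<bullet> e) = (\<lambda>e. \<Sum>i\<in>UNIV. (e$i)^2)"
    by (auto simp: inner_vec_def power2_eq_square)
  then have "integrable \<mu> (\<lambda>e::real^'l. e \<bullet> e)"
    using \<mu> by (simp add: finite_second_moments_def)
  then show "integrable \<mu> (\<lambda>e. C * (1 + e \<bullet> e))"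
    by (intro integrable_mult_right Bochner_Integration.integrable_add) auto
  have "measurable \<mu> borel = measurable borel (borel :: real measure)"
    using \<mu> by (intro measurable_cong_sets) (simp_all add: finite_second_moments_def)
  then show "g \<in> borel_measurable \<mu>"
    using borel_measurable_continuous_onI[OF assms(2)] by simp
  show "AE e in \<mu>. norm (g e) \<le> norm (C * (1 + e \<bullet> e))"
    using bound by (intro AE_I2) (force intro: order_trans[OF _ abs_ge_self])
qed

lemma integrable_component:
  "finite_second_moments \<mu> \<Longrightarrow> integrable \<mu> (\<lambda>e::real^'l. e$i)"
  by (rule integrable_quadratically_bounded[where C=1])
     (auto intro!: continuous_intros intro: order_trans[OF component_le_norm_cart norm_le_one_plus_inner_self])

lemma integrable_component_mult:
  assumes "finite_second_moments \<mu>"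
  shows "integrable \<mu> (\<lambda>e::real^'l. e$i * e$j)"
proof (rule integrable_quadratically_bounded[where C=1, OF assms])
  fix e :: "real^'l"
  have "\<bar>e$i * e$j\<bar> \<le> norm e * norm e"
    by (simp add: abs_mult mult_mono component_le_norm_cart)
  then show "\<bar>e$i * e$j\<bar> \<le> 1 * (1 + e \<bullet> e)"
    by (simp add: power2_norm_eq_inner[symmetric] power2_eq_square)
qed (auto intro!: continuous_intros)

lemma integrable_inner_sq:
  assumes "finite_second_moments \<mu>"
  shows "integrable \<mu> (\<lambda>e::real^'l. (u \<bullet> e)^2)"
proof (rule integrable_quadratically_bounded[where C="u \<bullet> u", OF assms])
  fix e :: "real^'l"
  have "(u \<bullet> e)^2 \<le> (u \<bullet> u) * (e \<bullet> e)"
    by (metis Cauchy_Schwarz_ineq)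
  also have "\<dots> \<le> (u \<bullet> u) * (1 + e \<bullet> e)"
    by (rule mult_left_mono) simp_all
  finally show "\<bar>(u \<bullet> e)^2\<bar> \<le> (u \<bullet> u) * (1 + e \<bullet> e)"
    by simp
qed (auto intro!: continuous_intros)

lemma quadratic_form_eq_sum:
  "e \<bullet> (Q *v e) = (\<Sum>i\<in>UNIV. \<Sum>k\<in>UNIV. Q$i$k * (e$k * (e::real^'l)$i))"
  by (simp add: inner_vec_def matrix_vector_mult_def sum_distrib_left mult_ac)

lemma integrable_quadratic_form:
  "finite_second_moments \<mu> \<Longrightarrow> integrable \<mu> (\<lambda>e::real^'l. e \<bullet> (Q *v e))"
  unfolding quadratic_form_eq_sum
  by (intro Bochner_Integration.integrable_sum integrable_mult_right integrable_component_mult)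

lemma integral_quadratic_form:
  assumes "finite_second_moments \<mu>"
  shows "(\<integral>e. e \<bullet> (Q *v e) \<partial>\<mu>) = trace (Q ** corr_matrix \<mu>)"
proof -
  have "(\<integral>e. e \<bullet> (Q *v e) \<partial>\<mu>) = (\<Sum>i\<in>UNIV. \<Sum>k\<in>UNIV. Q$i$k * (\<integral>e. e$k * e$i \<partial>\<mu>))"
    unfolding quadratic_form_eq_sum
    by (simp add: integrable_component_mult[OF assms])
  then show ?thesis
    by (simp add: trace_def matrix_matrix_mult_def corr_matrix_def)
qed

lemma integral_inner_zero_mean:
  assumes "finite_second_moments \<mu>" and "\<forall>i. (\<integral>e. e$i \<partial>\<mu>) = 0"
  shows "(\<integral>e. u \<bullet> (e::real^'l) \<partial>\<mu>) = 0"
proof -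
  have "(\<integral>e. u \<bullet> (e::real^'l) \<partial>\<mu>) = (\<Sum>i\<in>UNIV. u$i * (\<integral>e. e$i \<partial>\<mu>))"
    by (simp add: inner_vec_def integrable_component[OF assms(1)])
  then show ?thesis
    using assms(2) by simp
qed

lemma nn_integral_shifted_sq:
  assumes "\<mu> \<in> noise_dists Q"
  shows "(\<integral>\<^sup>+ e. ennreal ((d - u \<bullet> e)^2) \<partial>\<mu>) = ennreal (d^2 + (\<integral>e. (u \<bullet> (e::real^'l))^2 \<partial>\<mu>))"
proof -
  have \<mu>: "finite_second_moments \<mu>"
    by (rule noise_dists_finite_second_moments[OF assms])
  interpret prob_space \<mu>
    using \<mu> by (simp add: finite_second_moments_def)
  have sq: "(\<lambda>e. (d - u \<bullet> e)^2) = (\<lambda>e. d^2 - 2 * d * (u \<bullet> e) + (u \<bullet> e)^2)"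
    by (auto simp: power2_eq_square algebra_simps)
  have int_lin: "integrable \<mu> (\<lambda>e. u \<bullet> e)"
    unfolding inner_vec_def inner_real_def
    by (intro Bochner_Integration.integrable_sum integrable_mult_right integrable_component[OF \<mu>])
  have int: "integrable \<mu> (\<lambda>e. (d - u \<bullet> e)^2)"
    unfolding sq using int_lin integrable_inner_sq[OF \<mu>] by auto
  have "(\<integral>e. (d - u \<bullet> e)^2 \<partial>\<mu>) = d^2 - 2 * d * (\<integral>e. u \<bullet> e \<partial>\<mu>) + (\<integral>e. (u \<bullet> e)^2 \<partial>\<mu>)"
    unfolding sq using int_lin integrable_inner_sq[OF \<mu>] by (simp add: prob_space)
  also have "(\<integral>e. u \<bullet> e \<partial>\<mu>) = 0"
    using assms \<mu> integral_inner_zero_mean by (auto simp: noise_dists_def)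
  finally show ?thesis
    using nn_integral_eq_integral[OF int] by simp
qed

definition two_point :: "real^'l \<Rightarrow> (real^'l) measure" where
  "two_point v = distr (measure_pmf (bernoulli_pmf (1/2))) borel (\<lambda>b. if b then v else -v)"

lemma two_point_sign_measurable:
  "(\<lambda>b. if b then v else -v) \<in> measurable (measure_pmf (bernoulli_pmf (1/2))) (borel :: (real^'l) measure)"
proof -
  have "measurable (measure_pmf (bernoulli_pmf (1/2))) (borel :: (real^'l) measure) =
        measurable (count_space UNIV) borel"
    by (rule measurable_cong_sets) simp_all
  then show ?thesis by simp
qed

lemma integral_two_point:
  fixes g :: "real^'l \<Rightarrow> real"
  assumes "continuous_on UNIV g"
  shows "integrable (two_point v) g" and "(\<integral>e. g e \<partial>two_point v) = g v / 2 + g (-v) / 2"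
proof -
  note g = borel_measurable_continuous_onI[OF assms]
  show "integrable (two_point v) g"
    unfolding two_point_def integrable_distr_eq[OF two_point_sign_measurable g]
    by (rule integrable_measure_pmf_finite) simp
  have "(\<integral>e. g e \<partial>two_point v) = (\<integral>b. g (if b then v else -v) \<partial>measure_pmf (bernoulli_pmf (1/2)))"
    unfolding two_point_def by (rule integral_distr[OF two_point_sign_measurable g])
  then show "(\<integral>e. g e \<partial>two_point v) = g v / 2 + g (-v) / 2"
    by simp
qed

lemma two_point_in_noise_dists:
  fixes Q :: "real^'l^'l"
  assumes "v \<bullet> (Q *v v) \<le> 1"
  shows "two_point v \<in> noise_dists Q"
proof -
  have \<mu>: "finite_second_moments (two_point v)"
    unfolding finite_second_moments_def two_point_def
    using prob_space.prob_space_distr[OF prob_space_measure_pmf two_point_sign_measurable]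
    by (auto intro!: integral_two_point(1)[unfolded two_point_def] continuous_intros)
  have "Q *v (-v) = - (Q *v v)"
    using matrix_vector_mult_scaleR[of Q "-1" v] by simp
  then have "trace (Q ** corr_matrix (two_point v)) = v \<bullet> (Q *v v)"
    unfolding integral_quadratic_form[OF \<mu>, symmetric]
    by (subst integral_two_point(2)) (auto intro!: continuous_intros)
  moreover have "(\<integral>e. e$i \<partial>two_point v) = 0" for i
    by (subst integral_two_point(2)) (auto intro!: continuous_intros)
  ultimately show ?thesis
    using \<mu> assms unfolding noise_dists_def finite_second_moments_def by auto
qed

lemma integral_inner_sq_two_point: "(\<integral>e. (u \<bullet> e)^2 \<partial>two_point v) = (u \<bullet> v)^2"
  by (subst integral_two_point(2)) (auto intro!: continuous_intros)

lemma nn_integral_estimation_error: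
  assumes "\<mu> \<in> noise_dists Q2"
  shows "(\<integral>\<^sup>+ e. ennreal ((lv \<bullet> x - u \<bullet> (H *v x + e) - c)^2) \<partial>\<mu>)
       = ennreal (((lv - transpose H *v u) \<bullet> x - c)^2 + (\<integral>e. (u \<bullet> e)^2 \<partial>\<mu>))"
proof -
  have "lv \<bullet> x - u \<bullet> (H *v x + e) - c = ((lv - transpose H *v u) \<bullet> x - c) - u \<bullet> e" for e
    by (simp add: inner_add_right inner_diff_left inner_transpose_mult del: transpose_matrix_vector)
  then show ?thesis
    by (simp only: nn_integral_shifted_sq[OF assms])
qed

lemma worst_error_ge:
  assumes "f \<in> Gset Q1" and "F *v x = B *v f" and "\<mu> \<in> noise_dists Q2"
  shows "ennreal (((lv - transpose H *v u) \<bullet> x - c)^2 + (\<integral>e. (u \<bullet> e)^2 \<partial>\<mu>))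
           \<le> worst_error F B H Q1 Q2 lv u c"
  unfolding worst_error_def nn_integral_estimation_error[OF assms(3), symmetric]
  by (rule SUP_upper2[where i=x], use assms(1,2) in blast) (rule SUP_upper[OF assms(3)])

lemma worst_error_le:
  assumes "\<And>x f \<mu>. f \<in> Gset Q1 \<Longrightarrow> F *v x = B *v f \<Longrightarrow> \<mu> \<in> noise_dists Q2 \<Longrightarrow>
             ((lv - transpose H *v u) \<bullet> x - c)^2 + (\<integral>e. (u \<bullet> e)^2 \<partial>\<mu>) \<le> E"
  shows "worst_error F B H Q1 Q2 lv u c \<le> ennreal E"
  unfolding worst_error_def
proof (intro SUP_least)
  fix x \<mu>
  assume "x \<in> {x. \<exists>f\<in>Gset Q1. F *v x = B *v f}" and \<mu>: "\<mu> \<in> noise_dists Q2"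
  then obtain f where "f \<in> Gset Q1" and "F *v x = B *v f" by blast
  then show "(\<integral>\<^sup>+ e. ennreal ((lv \<bullet> x - u \<bullet> (H *v x + e) - c)^2) \<partial>\<mu>) \<le> ennreal E"
    unfolding nn_integral_estimation_error[OF \<mu>] by (intro ennreal_leI assms \<mu>)
qed

(* The tangent bound s^2/a >= 2s - a replaces the supremum of t^2 s^2 over t^2 a <= 1 and
   stays valid for a = 0; the sign of t is chosen so that the cross term -2tsc is nonnegative. *)
lemma exists_scaling_sq_ge:
  fixes a s c :: real
  assumes "0 \<le> a"
  obtains t where "t^2 * a \<le> 1" and "2 * s - a \<le> (t * s - c)^2"
proof -
  obtain t0 where t0: "t0^2 * a \<le> 1" "2 * s - a \<le> t0^2 * s^2"
  proof (cases "a = 0")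
    case True
    have "(sqrt (2 / \<bar>s\<bar>))^2 * s^2 = 2 * \<bar>s\<bar>"
      by (cases "s = 0") (simp_all add: power2_eq_square field_simps)
    then show ?thesis
      using True by (intro that[of "sqrt (2 / \<bar>s\<bar>)"]) simp_all
  next
    case False
    with assms have "0 < a" by simp
    have "s^2 / a - (2 * s - a) = (s - a)^2 / a"
      using \<open>0 < a\<close> by (simp add: field_simps power2_eq_square)
    moreover have "0 \<le> (s - a)^2 / a"
      using \<open>0 < a\<close> by simp
    ultimately have "2 * s - a \<le> s^2 / a"
      by linarith
    then show ?thesis
      using \<open>0 < a\<close> by (intro that[of "1 / sqrt a"]) (simp_all add: power_divide)
  qed
  define t where "t = (if t0 * s * c \<le> 0 then t0 else - t0)"
  have "t^2 = t0^2" and "t * s * c \<le> 0"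
    by (auto simp: t_def)
  moreover have "(t * s - c)^2 = t0^2 * s^2 - 2 * (t * s * c) + c^2"
    unfolding \<open>t^2 = t0^2\<close>[symmetric] by (simp add: power2_eq_square algebra_simps)
  ultimately have "t0^2 * s^2 \<le> (t * s - c)^2"
    using zero_le_power2[of c] by linarith
  then show ?thesis
    using t0 \<open>t^2 = t0^2\<close> by (intro that[of t]) simp_all
qed

locale kkt_solution =
  fixes F :: "real^'n^'m" and B :: "real^'p^'m" and H :: "real^'n^'l"
    and Q1 :: "real^'p^'p" and Q2 :: "real^'l^'l" and lv p :: "real^'n" and z :: "real^'m"
  assumes Q1: "sym_posdef Q1" and Q2: "sym_posdef Q2"
    and state_eq: "F *v p = (B ** matrix_inv Q1 ** transpose B) *v z"
    and adjoint_eq: "transpose F *v z = lv - transpose H *v (Q2 *v (H *v p))"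
begin

definition f_hat :: "real^'p" where
  "f_hat = matrix_inv Q1 *v (transpose B *v z)"

lemma F_p_eq: "F *v p = B *v f_hat"
  unfolding state_eq f_hat_def by (simp only: matrix_vector_mul_assoc matrix_mul_assoc)

lemma Q1_f_hat: "Q1 *v f_hat = transpose B *v z"
  unfolding f_hat_def using sym_posdef_invertible[OF Q1] by (simp add: matrix_vector_mul_assoc)

lemma residual_eq:
  assumes "F *v x = B *v f"
  shows "(lv - transpose H *v (Q2 *v (H *v p))) \<bullet> x = f_hat \<bullet> (Q1 *v f)"
proof -
  have "(lv - transpose H *v (Q2 *v (H *v p))) \<bullet> x = z \<bullet> (B *v f)"
    by (simp only: adjoint_eq[symmetric] inner_transpose_mult assms)
  also have "\<dots> = (Q1 *v f_hat) \<bullet> f"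
    by (metis Q1_f_hat inner_transpose_mult)
  also have "\<dots> = f_hat \<bullet> (Q1 *v f)"
    by (metis inner_commute symmetric_matrix_inner sym_posdef_symmetric[OF Q1])
  finally show ?thesis .
qed

lemma value_eq: "lv \<bullet> p = f_hat \<bullet> (Q1 *v f_hat) + (H *v p) \<bullet> (Q2 *v (H *v p))"
proof -
  have "lv \<bullet> p = (lv - transpose H *v (Q2 *v (H *v p))) \<bullet> p + (transpose H *v (Q2 *v (H *v p))) \<bullet> p"
    by (simp add: inner_diff_left del: transpose_matrix_vector)
  also have "\<dots> = f_hat \<bullet> (Q1 *v f_hat) + (H *v p) \<bullet> (Q2 *v (H *v p))"
    unfolding residual_eq[OF F_p_eq] inner_transpose_mult by (simp add: inner_commute)
  finally show ?thesis .
qed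

lemma worst_error_at_estimate_le: "worst_error F B H Q1 Q2 lv (Q2 *v (H *v p)) 0 \<le> ennreal (lv \<bullet> p)"
proof (rule worst_error_le)
  fix x f \<mu>
  assume f: "f \<in> Gset Q1" and x: "F *v x = B *v f" and \<mu>: "\<mu> \<in> noise_dists Q2"
  let ?w = "H *v p"
  have "((lv - transpose H *v (Q2 *v ?w)) \<bullet> x - 0)^2 = (f_hat \<bullet> (Q1 *v f))^2"
    by (simp add: residual_eq[OF x] del: transpose_matrix_vector)
  also have "\<dots> \<le> (f_hat \<bullet> (Q1 *v f_hat)) * (f \<bullet> (Q1 *v f))"
    by (rule sym_posdef_cauchy_schwarz[OF Q1])
  also have "\<dots> \<le> f_hat \<bullet> (Q1 *v f_hat)"
    using f sym_posdef_nonneg[OF Q1, of f_hat]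
    by (simp add: Gset_def inner_commute mult_left_le)
  finally have bias: "((lv - transpose H *v (Q2 *v ?w)) \<bullet> x - 0)^2 \<le> f_hat \<bullet> (Q1 *v f_hat)" .
  have \<mu>': "finite_second_moments \<mu>"
    by (rule noise_dists_finite_second_moments[OF \<mu>])
  have "(\<integral>e. ((Q2 *v ?w) \<bullet> e)^2 \<partial>\<mu>) \<le> (\<integral>e. (?w \<bullet> (Q2 *v ?w)) * (e \<bullet> (Q2 *v e)) \<partial>\<mu>)"
  proof (rule integral_mono)
    fix e :: "real^'l"
    have "(Q2 *v ?w) \<bullet> e = ?w \<bullet> (Q2 *v e)"
      by (metis inner_commute symmetric_matrix_inner sym_posdef_symmetric[OF Q2])
    then show "((Q2 *v ?w) \<bullet> e)^2 \<le> (?w \<bullet> (Q2 *v ?w)) * (e \<bullet> (Q2 *v e))"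
      using sym_posdef_cauchy_schwarz[OF Q2] by simp
  qed (simp_all add: integrable_inner_sq[OF \<mu>'] integrable_quadratic_form[OF \<mu>'])
  also have "\<dots> = (?w \<bullet> (Q2 *v ?w)) * trace (Q2 ** corr_matrix \<mu>)"
    by (simp add: integral_quadratic_form[OF \<mu>'])
  also have "\<dots> \<le> ?w \<bullet> (Q2 *v ?w)"
    using \<mu> sym_posdef_nonneg[OF Q2, of ?w]
    by (simp add: noise_dists_def mult_left_le)
  finally have variance: "(\<integral>e. ((Q2 *v ?w) \<bullet> e)^2 \<partial>\<mu>) \<le> ?w \<bullet> (Q2 *v ?w)" .
  show "((lv - transpose H *v (Q2 *v ?w)) \<bullet> x - 0)^2 + (\<integral>e. ((Q2 *v ?w) \<bullet> e)^2 \<partial>\<mu>) \<le> lv \<bullet> p"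
    using bias variance value_eq by linarith
qed

lemma value_le_worst_error: "ennreal (lv \<bullet> p) \<le> worst_error F B H Q1 Q2 lv u c"
proof -
  define a where "a = f_hat \<bullet> (Q1 *v f_hat)"
  define b where "b = (H *v p) \<bullet> (Q2 *v (H *v p))"
  define s1 where "s1 = (lv - transpose H *v u) \<bullet> p"
  define s2 where "s2 = u \<bullet> (H *v p)"
  have "s1 + s2 = a + b"
    using value_eq
    by (simp add: s1_def s2_def a_def b_def inner_diff_left inner_transpose_mult del: transpose_matrix_vector)
  obtain t where t: "t^2 * a \<le> 1" "2 * s1 - a \<le> (t * s1 - c)^2"
    using exists_scaling_sq_ge[of a] sym_posdef_nonneg[OF Q1] a_def by blast
  obtain r where r: "r^2 * b \<le> 1" "2 * s2 - b \<le> (r * s2 - 0)^2"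
    using exists_scaling_sq_ge[of b] sym_posdef_nonneg[OF Q2] b_def by blast
  have "t *\<^sub>R f_hat \<in> Gset Q1"
    using t(1) by (simp add: Gset_def a_def matrix_vector_mult_scaleR power2_eq_square inner_commute)
  moreover have "F *v (t *\<^sub>R p) = B *v (t *\<^sub>R f_hat)"
    by (simp add: matrix_vector_mult_scaleR F_p_eq)
  moreover have "two_point (r *\<^sub>R (H *v p)) \<in> noise_dists Q2"
    using r(1) by (intro two_point_in_noise_dists)
      (simp add: b_def matrix_vector_mult_scaleR power2_eq_square mult_ac)
  ultimately have "ennreal (((lv - transpose H *v u) \<bullet> (t *\<^sub>R p) - c)^2
      + (\<integral>e. (u \<bullet> e)^2 \<partial>two_point (r *\<^sub>R (H *v p)))) \<le> worst_error F B H Q1 Q2 lv u c"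
    by (rule worst_error_ge)
  moreover have "((lv - transpose H *v u) \<bullet> (t *\<^sub>R p) - c)^2
      + (\<integral>e. (u \<bullet> e)^2 \<partial>two_point (r *\<^sub>R (H *v p))) = (t * s1 - c)^2 + (r * s2 - 0)^2"
    by (simp add: integral_inner_sq_two_point s1_def s2_def del: transpose_matrix_vector)
  moreover have "lv \<bullet> p \<le> (t * s1 - c)^2 + (r * s2 - 0)^2"
    using t(2) r(2) \<open>s1 + s2 = a + b\<close> value_eq a_def b_def by linarith
  ultimately show ?thesis
    by (metis ennreal_leI order_trans)
qed

lemma worst_error_at_estimate: "worst_error F B H Q1 Q2 lv (Q2 *v (H *v p)) 0 = ennreal (lv \<bullet> p)"
  by (rule antisym[OF worst_error_at_estimate_le value_le_worst_error])

lemma minimax_error_eq: "minimax_error F B H Q1 Q2 lv = ennreal (lv \<bullet> p)"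
  unfolding minimax_error_def
proof (rule antisym)
  show "(INF uc. worst_error F B H Q1 Q2 lv (fst uc) (snd uc)) \<le> ennreal (lv \<bullet> p)"
    by (rule INF_lower2[of "(Q2 *v (H *v p), 0)"]) (simp_all add: worst_error_at_estimate)
  show "ennreal (lv \<bullet> p) \<le> (INF uc. worst_error F B H Q1 Q2 lv (fst uc) (snd uc))"
    by (rule INF_greatest) (rule value_le_worst_error)
qed

end

lemma eq_top_if_unbounded_sq:
  fixes s c :: real
  assumes "s \<noteq> 0" and "\<And>t. ennreal ((t * s - c)^2) \<le> W"
  shows "W = \<top>"
proof (rule ccontr)
  assume "W \<noteq> \<top>"
  then obtain E where W: "W = ennreal E" and "0 \<le> E"
    by (cases W) auto
  have "((c + E + 1) / s * s - c)^2 = (E + 1)^2"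
    using assms(1) by simp
  then have "(E + 1)^2 \<le> E"
    using assms(2)[of "(c + E + 1) / s"] W \<open>0 \<le> E\<close> by simp
  moreover have "E + 1 \<le> (E + 1)^2"
    using \<open>0 \<le> E\<close> by (intro self_le_power) simp_all
  ultimately show False
    by linarith
qed

lemma worst_error_eq_top:
  assumes "lv \<notin> Fspace F H"
  shows "worst_error F B H Q1 Q2 lv u c = \<top>"
proof -
  have "lv - transpose H *v u \<notin> range ((*v) (transpose F))"
  proof
    assume "lv - transpose H *v u \<in> range ((*v) (transpose F))"
    then obtain z where "lv - transpose H *v u = transpose F *v z" by blast
    then have "lv = transpose F *v z + transpose H *v u"
      by (simp add: algebra_simps del: transpose_matrix_vector)
    with assms show False
      unfolding Fspace_def by blast
  qed
  then obtain r where Fr: "F *v r = 0" and s: "(lv - transpose H *v u) \<bullet> r \<noteq> 0"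
    by (rule kernel_vector_not_orthogonal)
  show ?thesis
  proof (rule eq_top_if_unbounded_sq[OF s])
    fix t
    have "0 \<in> Gset Q1" and "F *v (t *\<^sub>R r) = B *v 0"
      by (simp_all add: Gset_def matrix_vector_mult_scaleR Fr)
    moreover have "two_point 0 \<in> noise_dists Q2"
      by (rule two_point_in_noise_dists) simp
    ultimately show "ennreal ((t * ((lv - transpose H *v u) \<bullet> r) - c)^2) \<le> worst_error F B H Q1 Q2 lv u c"
      using worst_error_ge[of 0 Q1 F "t *\<^sub>R r" B "two_point 0" Q2 lv H u c]
      by (simp add: integral_inner_sq_two_point del: transpose_matrix_vector)
  qed
qed

theorem mainTheorem1:
  fixes F :: "real^'n^'m" and B :: "real^'p^'m" and H :: "real^'n^'l"
    and Q1 :: "real^'p^'p" and Q2 :: "real^'l^'l" and lv :: "real^'n"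
  assumes "sym_posdef Q1" and "sym_posdef Q2"
  shows "(lv \<in> Fspace F H \<longrightarrow>
            (\<exists>p z. F *v p = (B ** matrix_inv Q1 ** transpose B) *v z \<and>
                   transpose F *v z = lv - transpose H *v (Q2 *v (H *v p))) \<and>
            (\<forall>p z. F *v p = (B ** matrix_inv Q1 ** transpose B) *v z \<and>
                   transpose F *v z = lv - transpose H *v (Q2 *v (H *v p)) \<longrightarrow>
               worst_error F B H Q1 Q2 lv (Q2 *v (H *v p)) 0 = minimax_error F B H Q1 Q2 lv \<and>
               minimax_error F B H Q1 Q2 lv = ennreal (lv \<bullet> p)))
       \<and> (lv \<notin> Fspace F H \<longrightarrow> minimax_error F B H Q1 Q2 lv = \<infinity>)"
proof (intro conjI impI allI)
  assume "lv \<in> Fspace F H"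
  then show "\<exists>p z. F *v p = (B ** matrix_inv Q1 ** transpose B) *v z \<and>
                   transpose F *v z = lv - transpose H *v (Q2 *v (H *v p))"
    by (rule kkt_system_solvable[OF assms])
next
  fix p z
  assume "F *v p = (B ** matrix_inv Q1 ** transpose B) *v z \<and>
          transpose F *v z = lv - transpose H *v (Q2 *v (H *v p))"
  then interpret kkt_solution F B H Q1 Q2 lv p z
    using assms by unfold_locales auto
  show "worst_error F B H Q1 Q2 lv (Q2 *v (H *v p)) 0 = minimax_error F B H Q1 Q2 lv"
    and "minimax_error F B H Q1 Q2 lv = ennreal (lv \<bullet> p)"
    by (simp_all add: worst_error_at_estimate minimax_error_eq)
next
  assume "lv \<notin> Fspace F H"
  then show "minimax_error F B H Q1 Q2 lv = \<infinity>"
    unfolding minimax_error_def by (simp add: worst_error_eq_top)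
qed

end
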